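(* For every $n\ge1$, letting $k_n=\lceil\log_2 n\rceil$, $$c_n=2^{k_n-1}\,\mathsf{T}\!\left(\frac{n}{2^{k_n-1}}-1\right),$$ where $\mathsf{T}:[0,1]\to\mathbb{R}$ is the Takagi (Blancmange) function $\mathsf{T}(x)=\sum_{i=0}^{\infty}2^{-i}s(2^i x)$ and $s(x)=\min_{z\in\mathbb{Z}}|x-z|$.
   Context: Bifurcating trees: rooted trees in which every internal node has exactly two children; $\mathcal{T}_n$ is the set of isomorphism classes of bifurcating trees with $n$ leaves. For a node $w$, $\kappa_T(w)$ is its number of descendant leaves. The Colless index is $\mathcal{C}(T)=\sum_{v}|\kappa_T(v_1)-\kappa_T(v_2)|$, summed over internal nodes $v$ with children $v_1,v_2$; $c_n=\min\{\mathcal{C}(T):T\in\mathcal{T}_n\}$. (For $n=1$, $k_n=0$ and the argument of $\mathsf{T}$ is $1$.) *)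

theory Defs
  imports Complex_Main
begin

text \<open>Rooted bifurcating trees (unlabelled); isomorphism classes are handled by
  taking the minimum over all trees, since the Colless index is invariant
  under swapping children.\<close>
datatype btree = Leaf | Node btree btree

fun leaves :: "btree \<Rightarrow> nat" where
  "leaves Leaf = 1"
| "leaves (Node l r) = leaves l + leaves r"

fun colless :: "btree \<Rightarrow> nat" where
  "colless Leaf = 0"
| "colless (Node l r) =
     nat \<bar>int (leaves l) - int (leaves r)\<bar> + colless l + colless r"

definition min_colless :: "nat \<Rightarrow> nat" where
  "min_colless n = Min {colless t | t. leaves t = n}"

definition dist_int :: "real \<Rightarrow> real" where
  "dist_int x = (INF z::int. \<bar>x - of_int z\<bar>)"

definition takagi :: "real \<Rightarrow> real" where
  "takagi x = (\<Sum>i. dist_int (2 ^ i * x) / 2 ^ i)"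

end

theory Submission
  imports Defs
begin

text \<open>Let d j n be the distance from n to the nearest multiple of 2^j, and let S n be
  the sum of d j n over all j with 2^j < n. Then S (2m) = 2 S m and
  S (2m+1) = S m + S (m+1) + 1, which is the Colless recursion of the maximally balanced
  tree, so S n is attained. Conversely S (a+b) \<le> S a + S b + |a - b| (strong induction on
  a + b, split by the parities of a and b), so by induction on trees no tree does better,
  and c_n = S n. On the other side, the Takagi function at a dyadic rational is a finite
  sum, 2^p T (q/2^p) = \<Sum>j<p. d (j+1) q, and for 2^p < n \<le> 2^(p+1) this is S n with
  q = n - 2^p, since subtracting 2^p does not change d (j+1) for j < p.\<close>

definition dist_pow2 :: "nat \<Rightarrow> nat \<Rightarrow> nat" where
  "dist_pow2 j n = min (n mod 2^j) (2^j - n mod 2^j)"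

definition dist_pow2_sum :: "nat \<Rightarrow> nat" where
  "dist_pow2_sum n = (\<Sum>j<n. if 2^j < n then dist_pow2 j n else 0)"

lemma dist_pow2_sum_eq_lessThan:
  assumes "n \<le> N"
  shows "dist_pow2_sum n = (\<Sum>j<N. if 2^j < n then dist_pow2 j n else 0)"
proof -
  have "\<not> 2^j < n" if "n \<le> j" for j :: nat
    using that less_exp[of j] by linarith
  then show ?thesis
    unfolding dist_pow2_sum_def using assms by (intro sum.mono_neutral_left) auto
qed

lemma dist_pow2_0 [simp]: "dist_pow2 0 n = 0"
  by (simp add: dist_pow2_def)

lemma dist_pow2_self: "dist_pow2 j (2^j) = 0"
  by (simp add: dist_pow2_def)

lemma dist_pow2_Suc_double: "dist_pow2 (Suc j) (2*m) = 2 * dist_pow2 j m"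
proof -
  have "(2*m) mod 2^Suc j = 2 * (m mod 2^j)"
    by (simp add: mod_mult_mult1)
  then show ?thesis
    by (auto simp: dist_pow2_def min_def)
qed

lemma dist_pow2_Suc_odd:
  "dist_pow2 (Suc j) (2*m+1) = dist_pow2 j m + dist_pow2 j (m+1) + (if j = 0 then 1 else 0)"
proof (cases j)
  case 0
  then show ?thesis by (simp add: dist_pow2_def)
next
  case (Suc i)
  define r where "r = m mod 2^j"
  have r_less: "r < 2 * 2^i"
    using Suc by (simp add: r_def)
  have odd_mod: "(2*m+1) mod 2^Suc j = 2*r+1"
    using mod_mult2_eq[of "2*m+1" 2 "2^j"] by (simp add: r_def)
  have Suc_mod: "(m+1) mod 2^j = (if Suc r = 2^j then 0 else Suc r)"
    using mod_Suc[of m "2^j"] by (simp add: r_def)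
  have "min (2*r+1) (4*2^i - (2*r+1)) =
     min r (2*2^i - r) + (if Suc r = 2*2^i then 0 else min (Suc r) (2*2^i - Suc r))"
    using r_less by (auto simp: min_def; presburger)
  then show ?thesis
    using Suc odd_mod Suc_mod by (simp add: dist_pow2_def r_def)
qed

lemma dist_pow2_sum_0 [simp]: "dist_pow2_sum 0 = 0"
  by (simp add: dist_pow2_sum_def)

lemma dist_pow2_sum_1 [simp]: "dist_pow2_sum (Suc 0) = 0"
  by (simp add: dist_pow2_sum_def)

lemma dist_pow2_sum_double: "dist_pow2_sum (2*m) = 2 * dist_pow2_sum m"
proof -
  have "dist_pow2_sum (2*m) = (\<Sum>j<Suc (2*m). if 2^j < 2*m then dist_pow2 j (2*m) else 0)"
    by (rule dist_pow2_sum_eq_lessThan) simp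
  also have "\<dots> = (\<Sum>j<2*m. if 2^Suc j < 2*m then dist_pow2 (Suc j) (2*m) else 0)"
    by (subst sum.lessThan_Suc_shift) simp
  also have "\<dots> = (\<Sum>j<2*m. 2 * (if 2^j < m then dist_pow2 j m else 0))"
    by (rule sum.cong) (auto simp: dist_pow2_Suc_double)
  also have "\<dots> = 2 * dist_pow2_sum m"
    by (simp add: sum_distrib_left[symmetric] dist_pow2_sum_eq_lessThan[of m "2*m"])
  finally show ?thesis .
qed

lemma dist_pow2_sum_odd:
  assumes "m \<ge> 1"
  shows "dist_pow2_sum (2*m+1) = dist_pow2_sum m + dist_pow2_sum (m+1) + 1"
proof -
  have termwise: "(if 2^Suc j < 2*m+1 then dist_pow2 (Suc j) (2*m+1) else 0) =
      (if 2^j < m then dist_pow2 j m else 0) + (if 2^j < m+1 then dist_pow2 j (m+1) else 0)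
      + (if j = 0 then 1 else 0)" for j
  proof (cases "2^j < m+1")
    case True
    then show ?thesis
      using dist_pow2_self[of j] dist_pow2_Suc_odd[of j m] by (cases "2^j = m") auto
  next
    case False
    then have "j \<noteq> 0" using assms by (cases j) auto
    with False show ?thesis by auto
  qed
  have "dist_pow2_sum (2*m+1) =
      (\<Sum>j<Suc (2*m+1). if 2^j < 2*m+1 then dist_pow2 j (2*m+1) else 0)"
    by (rule dist_pow2_sum_eq_lessThan) simp
  also have "\<dots> = (\<Sum>j<2*m+1. if 2^Suc j < 2*m+1 then dist_pow2 (Suc j) (2*m+1) else 0)"
    by (subst sum.lessThan_Suc_shift) simp
  also have "\<dots> = (\<Sum>j<2*m+1. if 2^j < m then dist_pow2 j m else 0)
       + (\<Sum>j<2*m+1. if 2^j < m+1 then dist_pow2 j (m+1) else 0)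
       + (\<Sum>j<2*m+1. if j = 0 then 1 else 0)"
    by (simp only: termwise sum.distrib)
  also have "\<dots> = dist_pow2_sum m + dist_pow2_sum (m+1) + 1"
    using dist_pow2_sum_eq_lessThan[of m "2*m+1"] dist_pow2_sum_eq_lessThan[of "m+1" "2*m+1"]
    by simp
  finally show ?thesis .
qed

lemma dist_pow2_sum_add_le_even_odd:
  fixes x y :: nat
  defines "S \<equiv> \<lambda>n. int (dist_pow2_sum n)"
  assumes "x \<ge> 1"
    and "S (x+y) \<le> S x + S y + \<bar>int x - int y\<bar>"
    and "S (x+y+1) \<le> S x + S (y+1) + \<bar>int x - int y - 1\<bar>"
  shows "S (2*x + (2*y+1)) \<le> S (2*x) + S (2*y+1) + \<bar>int (2*x) - int (2*y+1)\<bar>"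
proof -
  have sum: "S (2*x + (2*y+1)) = S (x+y) + S (x+y+1) + 1"
    using dist_pow2_sum_odd[of "x+y"] \<open>x \<ge> 1\<close> by (simp add: S_def algebra_simps)
  have "S (2*x) = 2 * S x"
    by (simp add: S_def dist_pow2_sum_double)
  moreover have "S (2*y+1) = (if y = 0 then 0 else S y + S (y+1) + 1)"
    using dist_pow2_sum_odd[of y] by (simp add: S_def)
  ultimately show ?thesis
    using sum assms(3-4) \<open>x \<ge> 1\<close> by (cases "y = 0") (auto simp: S_def)
qed

lemma dist_pow2_sum_add_le_odd_odd:
  fixes x y :: nat
  defines "S \<equiv> \<lambda>n. int (dist_pow2_sum n)"
  assumes "S (x+y+1) \<le> S (x+1) + S y + \<bar>int x + 1 - int y\<bar>"
    and "S (x+y+1) \<le> S x + S (y+1) + \<bar>int x - int y - 1\<bar>"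
  shows "S ((2*x+1) + (2*y+1)) \<le> S (2*x+1) + S (2*y+1) + \<bar>int (2*x+1) - int (2*y+1)\<bar>"
proof -
  have "S ((2*x+1) + (2*y+1)) = 2 * S (x+y+1)"
    using dist_pow2_sum_double[of "x+y+1"] by (simp add: S_def algebra_simps)
  moreover have "S (2*x+1) = (if x = 0 then 0 else S x + S (x+1) + 1)"
    using dist_pow2_sum_odd[of x] by (simp add: S_def)
  moreover have "S (2*y+1) = (if y = 0 then 0 else S y + S (y+1) + 1)"
    using dist_pow2_sum_odd[of y] by (simp add: S_def)
  ultimately show ?thesis
    using assms(2-3) by (auto simp: S_def)
qed

lemma dist_pow2_sum_add_le:
  "int (dist_pow2_sum (a+b)) \<le> int (dist_pow2_sum a) + int (dist_pow2_sum b) + \<bar>int a - int b\<bar>"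
proof (induction "a+b" arbitrary: a b rule: less_induct)
  case less
  show ?case
  proof (cases "a = 0 \<or> b = 0")
    case True
    then show ?thesis by auto
  next
    case False
    consider (even_even) x y where "a = 2*x" "b = 2*y"
      | (even_odd) x y where "a = 2*x" "b = 2*y+1"
      | (odd_even) x y where "a = 2*x+1" "b = 2*y"
      | (odd_odd) x y where "a = 2*x+1" "b = 2*y+1"
      by (metis evenE oddE)
    then show ?thesis
    proof cases
      case even_even
      with less[of x y] False show ?thesis
        using dist_pow2_sum_double[of "x+y"]
        by (simp add: dist_pow2_sum_double distrib_left)
    next
      case even_odd
      then have "x \<ge> 1" "x + y < a + b" "x + y + 1 < a + b"
        using False by auto
      with even_odd show ?thesis
        using dist_pow2_sum_add_le_even_odd[of x y] less[of x y] less[of x "y+1"] by simp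
    next
      case odd_even
      then have "y \<ge> 1" "y + x < a + b" "y + x + 1 < a + b"
        using False by auto
      with odd_even show ?thesis
        using dist_pow2_sum_add_le_even_odd[of y x] less[of y x] less[of y "x+1"]
        by (simp add: add.commute abs_minus_commute)
    next
      case odd_odd
      then have "x + 1 + y < a + b" "x + (y + 1) < a + b"
        by auto
      with odd_odd show ?thesis
        using dist_pow2_sum_add_le_odd_odd[of x y] less[of "x+1" y] less[of x "y+1"] by simp
    qed
  qed
qed

lemma leaves_ge_1: "leaves t \<ge> 1"
  by (induction t) auto

lemma colless_le_leaves_sq: "colless t \<le> leaves t ^ 2"
proof (induction t)
  case Leaf
  then show ?case by simp
next
  case (Node l r)
  have "leaves l \<le> leaves l * leaves r" "leaves r \<le> leaves l * leaves r"
    using leaves_ge_1[of l] leaves_ge_1[of r] by simp_all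
  then have "nat \<bar>int (leaves l) - int (leaves r)\<bar> \<le> 2 * leaves l * leaves r"
    by arith
  with Node show ?case
    by (simp add: power2_sum)
qed

lemma dist_pow2_sum_le_colless: "dist_pow2_sum (leaves t) \<le> colless t"
proof (induction t)
  case Leaf
  then show ?case by simp
next
  case (Node l r)
  with dist_pow2_sum_add_le[of "leaves l" "leaves r"] show ?case
    by simp
qed

lemma ex_tree_colless_eq_dist_pow2_sum:
  "n \<ge> 1 \<Longrightarrow> \<exists>t. leaves t = n \<and> colless t = dist_pow2_sum n"
proof (induction n rule: less_induct)
  case (less n)
  consider "n = 1" | m where "n = 2*m" "m \<ge> 1" | m where "n = 2*m+1" "m \<ge> 1"
    using less.prems by (metis evenE oddE One_nat_def add_0 mult_0_right less_one not_le)
  then show ?case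
  proof cases
    case 1
    then show ?thesis by (intro exI[of _ Leaf]) simp
  next
    case (2 m)
    with less.IH[of m] obtain t where "leaves t = m" "colless t = dist_pow2_sum m"
      by auto
    with 2 show ?thesis
      by (intro exI[of _ "Node t t"]) (simp add: dist_pow2_sum_double)
  next
    case (3 m)
    with less.IH[of m] less.IH[of "m+1"]
    obtain t u where "leaves t = m+1" "colless t = dist_pow2_sum (m+1)"
      and "leaves u = m" "colless u = dist_pow2_sum m"
      by auto
    with 3 show ?thesis
      using dist_pow2_sum_odd[of m] by (intro exI[of _ "Node t u"]) simp
  qed
qed

lemma min_colless_eq_dist_pow2_sum:
  assumes "n \<ge> 1"
  shows "min_colless n = dist_pow2_sum n"
  unfolding min_colless_def
proof (rule Min_eqI)
  show "finite {colless t |t. leaves t = n}"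
    by (rule finite_subset[of _ "{..n^2}"]) (use colless_le_leaves_sq in auto)
  show "dist_pow2_sum n \<le> c" if "c \<in> {colless t |t. leaves t = n}" for c
    using that dist_pow2_sum_le_colless by auto
  show "dist_pow2_sum n \<in> {colless t |t. leaves t = n}"
    using ex_tree_colless_eq_dist_pow2_sum[OF assms] by force
qed

lemma dist_int_eq_min_frac: "dist_int x = min (frac x) (1 - frac x)"
  unfolding dist_int_def
proof (rule antisym)
  have bdd: "bdd_below (range (\<lambda>z::int. \<bar>x - of_int z\<bar>))"
    by (rule bdd_belowI[of _ 0]) auto
  have "(INF z::int. \<bar>x - of_int z\<bar>) \<le> \<bar>x - of_int \<lfloor>x\<rfloor>\<bar>"
    and "(INF z::int. \<bar>x - of_int z\<bar>) \<le> \<bar>x - of_int (\<lfloor>x\<rfloor> + 1)\<bar>"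
    by (rule cINF_lower[OF bdd]; simp)+
  then show "(INF z::int. \<bar>x - of_int z\<bar>) \<le> min (frac x) (1 - frac x)"
    by (simp add: frac_def)
next
  show "min (frac x) (1 - frac x) \<le> (INF z::int. \<bar>x - of_int z\<bar>)"
  proof (rule cINF_greatest)
    fix z :: int
    have "z \<le> \<lfloor>x\<rfloor> \<or> z \<ge> \<lfloor>x\<rfloor> + 1" by linarith
    then have "real_of_int z \<le> of_int \<lfloor>x\<rfloor> \<or> real_of_int z \<ge> of_int \<lfloor>x\<rfloor> + 1"
      by (metis of_int_1 of_int_add of_int_le_iff)
    then show "min (frac x) (1 - frac x) \<le> \<bar>x - of_int z\<bar>"
      unfolding frac_def by linarith
  qed simp
qed

lemma dist_int_of_nat_div_pow2: "dist_int (real q / 2^j) = real (dist_pow2 j q) / 2^j"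
proof -
  define r where "r = q mod 2^j"
  have "real q / 2^j - real r / 2^j = real (q div 2^j)"
    using div_mult_mod_eq[of q "2^j"] unfolding r_def
    by (metis add_diff_cancel_right' diff_divide_distrib nonzero_mult_div_cancel_right
        of_nat_add of_nat_mult of_nat_numeral of_nat_power power_not_zero zero_neq_numeral)
  moreover have "r < 2^j"
    by (simp add: r_def)
  then have "real r / 2^j < 1"
    by (simp add: divide_less_eq)
  ultimately have "frac (real q / 2^j) = real r / 2^j"
    by (simp add: frac_unique_iff)
  moreover have "real (dist_pow2 j q) = min (real r) (2^j - real r)"
    using \<open>r < 2^j\<close> unfolding dist_pow2_def r_def of_nat_min by (simp add: of_nat_diff)
  ultimately show ?thesis
    by (simp add: dist_int_eq_min_frac min_divide_distrib_right diff_divide_distrib)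
qed

lemma takagi_of_nat_div_pow2: "2^p * takagi (real q / 2^p) = real (\<Sum>j<p. dist_pow2 (Suc j) q)"
proof -
  define f where "f i = dist_int (2^i * (real q / 2^p)) / 2^i" for i :: nat
  have "f i = 0" if "i \<ge> p" for i
  proof -
    have "(2::real)^i = 2^p * 2^(i-p)"
      using that by (simp add: power_add[symmetric])
    then have "2^i * (real q / 2^p) = real (q * 2^(i-p)) / 2^0"
      by simp
    then show ?thesis
      unfolding f_def by (simp only: dist_int_of_nat_div_pow2) simp
  qed
  then have "takagi (real q / 2^p) = (\<Sum>i<p. f i)"
    unfolding takagi_def f_def[symmetric] by (intro suminf_finite) auto
  also have "\<dots> = (\<Sum>i<p. real (dist_pow2 (p - i) q) / 2^p)"
  proof (rule sum.cong)
    fix i assume "i \<in> {..<p}"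
    then have split: "(2::real)^p = 2^i * 2^(p-i)"
      by (simp add: power_add[symmetric])
    then have "f i = dist_int (real q / 2^(p-i)) / 2^i"
      unfolding f_def by simp
    also have "\<dots> = real (dist_pow2 (p - i) q) / 2^p"
      unfolding dist_int_of_nat_div_pow2 split by (simp add: mult.commute)
    finally show "f i = real (dist_pow2 (p - i) q) / 2^p" .
  qed simp
  also have "\<dots> = (\<Sum>j<p. real (dist_pow2 (Suc j) q)) / 2^p"
    by (subst sum.nat_diff_reindex[symmetric])
      (simp add: sum_divide_distrib Suc_diff_Suc)
  finally show ?thesis
    by simp
qed

lemma dist_pow2_sum_eq_sum_dist_pow2:
  assumes lo: "2^p < n" and hi: "n \<le> 2^Suc p"
  shows "dist_pow2_sum n = (\<Sum>j<p. dist_pow2 (Suc j) (n - 2^p))"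
proof -
  have "2^j < n \<longleftrightarrow> j < Suc p" for j
  proof
    assume "2^j < n"
    with hi show "j < Suc p"
      using power_less_imp_less_exp[of "2::nat" j "Suc p"] by simp
  next
    assume "j < Suc p"
    then have "(2::nat)^j \<le> 2^p" by (simp add: power_increasing)
    with lo show "2^j < n" by linarith
  qed
  then have "dist_pow2_sum n = (\<Sum>j<n. if j < Suc p then dist_pow2 j n else 0)"
    unfolding dist_pow2_sum_def by simp
  also have "\<dots> = (\<Sum>j<Suc p. dist_pow2 j n)"
  proof -
    have "Suc p \<le> n"
      using lo less_exp[of p] by linarith
    then show ?thesis
      by (intro sum.mono_neutral_cong_right) auto
  qed
  also have "\<dots> = (\<Sum>j<p. dist_pow2 (Suc j) n)"
    by (subst sum.lessThan_Suc_shift) simp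
  also have "\<dots> = (\<Sum>j<p. dist_pow2 (Suc j) (n - 2^p))"
  proof (rule sum.cong)
    fix j assume "j \<in> {..<p}"
    then have "Suc j + (p - Suc j) = p"
      by simp
    then have "(2::nat)^p = 2^Suc j * 2^(p - Suc j)"
      by (metis power_add)
    then have "n mod 2^Suc j = (n - 2^p) mod 2^Suc j"
      using lo by (metis le_add_diff_inverse less_imp_le mod_mult_self2 add.commute)
    then show "dist_pow2 (Suc j) n = dist_pow2 (Suc j) (n - 2^p)"
      by (simp add: dist_pow2_def)
  qed simp
  finally show ?thesis .
qed

theorem corollary4:
  fixes n :: nat
  assumes "n \<ge> 1"
  defines "k \<equiv> \<lceil>log 2 (real n)\<rceil>"
  shows "real (min_colless n) =
           2 powr (real_of_int k - 1) * takagi (real n / 2 powr (real_of_int k - 1) - 1)"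
proof (cases "n = 1")
  case True
  then have "k = 0"
    by (simp add: k_def)
  with True show ?thesis
    using min_colless_eq_dist_pow2_sum[of 1] takagi_of_nat_div_pow2[of 0 1]
    by (simp add: powr_minus)
next
  case False
  with assms obtain p where lo: "2^p < n" and hi: "n \<le> 2^Suc p"
    using ex_power_ivl2[of 2 n] by auto
  then have "k = int p + 1"
    unfolding k_def using ceiling_log_nat_eq_if[of 2 p n] by simp
  then have pow: "2 powr (real_of_int k - 1) = 2^p"
    by (simp add: powr_realpow)
  have arg: "real n / 2^p - 1 = real (n - 2^p) / 2^p"
    using lo by (simp add: of_nat_diff field_simps)
  show ?thesis
    unfolding pow arg
    using min_colless_eq_dist_pow2_sum[OF assms(1)] dist_pow2_sum_eq_sum_dist_pow2[OF lo hi]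
      takagi_of_nat_div_pow2[of p "n - 2^p"]
    by simp
qed

end
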